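(* Fix $r\ge1$ and define $R_1=\{\tilde\mu:|\tilde\mu|\le r/\sin(\pi/10)\}$ and $R_2=\{\tilde\mu:\mathrm{Re}(\tilde\mu)\in[r/\tan(\pi/10),\epsilon^{-1/2}],\ \mathrm{Im}(\tilde\mu)\in[-2,2]\}$. Then $R_1$ is compact and $R_1\cup R_2$ contains $\tilde{\mathcal C}_\epsilon$. Moreover $g_\epsilon(\tilde\mu)\to e^{-\tilde\mu/2}$ as $\epsilon\to0$, uniformly in $\tilde\mu\in R_1$; and there exist $\epsilon_0>0$ and a constant $c>0$ such that for all $\epsilon<\epsilon_0$ and all $\tilde\mu\in R_2$, $$|g_\epsilon(\tilde\mu)|\le|e^{-\tilde\mu/2}|\,|e^{-c\epsilon^{1/2}\tilde\mu^2}|.$$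
   Context: $\tau=\frac{1-\epsilon^{1/2}}{1+\epsilon^{1/2}}$ and $g_\epsilon(\tilde\mu)=\prod_{k=0}^\infty(1-\epsilon^{1/2}\tilde\mu\tau^k)$. $\tilde{\mathcal C}_\epsilon=\{e^{i\theta}:\pi/2\le\theta\le3\pi/2\}\cup\{x\pm i:0<x\le\epsilon^{-1/2}-1\}\cup\{\epsilon^{-1/2}-1+iy:-1<y<1\}$. *)

theory Defs
  imports "HOL-Analysis.Analysis"
begin

definition tau :: "real \<Rightarrow> real" where
  "tau \<epsilon> = (1 - sqrt \<epsilon>) / (1 + sqrt \<epsilon>)"

definition g :: "real \<Rightarrow> complex \<Rightarrow> complex" where
  "g \<epsilon> \<mu> = (\<Prod>k. 1 - complex_of_real (sqrt \<epsilon>) * \<mu> * complex_of_real (tau \<epsilon> ^ k))"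

definition Ctilde :: "real \<Rightarrow> complex set" where
  "Ctilde \<epsilon> =
     {cis \<theta> | \<theta>. pi/2 \<le> \<theta> \<and> \<theta> \<le> 3*pi/2}
   \<union> {Complex x s | x s. (s = 1 \<or> s = -1) \<and> 0 < x \<and> x \<le> 1 / sqrt \<epsilon> - 1}
   \<union> {Complex (1 / sqrt \<epsilon> - 1) y | y. -1 < y \<and> y < 1}"

definition R1 :: "real \<Rightarrow> complex set" where
  "R1 r = {\<mu>. cmod \<mu> \<le> r / sin (pi/10)}"

definition R2 :: "real \<Rightarrow> real \<Rightarrow> complex set" where
  "R2 r \<epsilon> = {\<mu>. r / tan (pi/10) \<le> Re \<mu> \<and> Re \<mu> \<le> 1 / sqrt \<epsilon>
                   \<and> -2 \<le> Im \<mu> \<and> Im \<mu> \<le> 2}"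

end

theory Submission
  imports Defs
begin

text \<open>
  Write \<open>g \<epsilon> \<mu> = (\<Prod>k. 1 - w\<^sub>k)\<close> with \<open>w\<^sub>k = \<surd>\<epsilon> \<mu> \<tau>\<^sup>k\<close>, where
  \<open>\<Sum>\<tau>\<^sup>k = (1 + \<surd>\<epsilon>) / (2\<surd>\<epsilon>)\<close> and \<open>\<Sum>(\<tau>\<^sup>k)\<^sup>2 = (1 + \<surd>\<epsilon>)\<^sup>2 / (4\<surd>\<epsilon>)\<close>.
  For bounded \<open>\<mu>\<close> all \<open>|w\<^sub>k| \<le> 1/2\<close>, so taking logarithms
  \<open>log g = -\<Sum>w\<^sub>k + O(\<Sum>|w\<^sub>k|\<^sup>2) = -\<mu>/2 + O(\<surd>\<epsilon>)\<close>, uniformly.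
  On the strip \<open>R2\<close> the first factors need not be small, but each one satisfies
  \<open>|1 - w| \<le> exp (- Re w - (Re w)\<^sup>2/4 + (Im w)\<^sup>2)\<close> as long as \<open>0 \<le> Re w \<le> 1\<close> and
  \<open>Im w\<close> is small; summing these exponents geometrically gives
  \<open>- Re \<mu>/2 - \<surd>\<epsilon>/32 \<cdot> Re (\<mu>\<^sup>2)\<close> because \<open>Re \<mu> \<ge> 2\<close> there.
  The covering is elementary: \<open>K = r cot(\<pi>/10)\<close> satisfies \<open>K\<^sup>2 + r\<^sup>2 = (r / sin(\<pi>/10))\<^sup>2\<close>,
  so the part of the contour with real part at most \<open>K\<close> lies in \<open>R1\<close> and the rest in \<open>R2\<close>.
\<close>

lemma one_minus_le_exp_quadratic:
  fixes a :: real
  assumes "0 \<le> a"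
  shows "1 - a \<le> exp (- a - a^2/2)"
proof -
  let ?f = "\<lambda>x::real. (1 - x) * exp (x + x^2/2)"
  have "?f a \<le> ?f 0"
  proof (rule DERIV_nonpos_imp_nonincreasing[OF assms])
    fix x :: real
    have "DERIV ?f x :> - exp (x + x^2/2) + (1 - x) * (exp (x + x^2/2) * (1 + x))"
      by (rule derivative_eq_intros refl | simp)+
    moreover have "- exp (x + x^2/2) + (1 - x) * (exp (x + x^2/2) * (1 + x)) = - (x^2 * exp (x + x^2/2))"
      by (simp add: algebra_simps power2_eq_square)
    ultimately show "\<exists>y. DERIV ?f x :> y \<and> y \<le> 0"
      by auto
  qed
  then have "1 - a \<le> 1 / exp (a + a^2/2)"
    by (simp add: pos_le_divide_eq)
  also have "\<dots> = exp (- (a + a^2/2))"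
    by (rule exp_minus' [symmetric])
  finally show ?thesis
    by simp
qed

lemma exp_minus_one_fiftieth_le: "exp (- (1/50) :: real) \<le> 50/51"
proof -
  have "inverse (exp (1/50 :: real)) \<le> inverse (1 + 1/50)"
    using exp_ge_add_one_self[of "1/50 :: real"] by (intro le_imp_inverse_le) auto
  then show ?thesis
    by (simp add: exp_minus)
qed

lemma exp_minus_five_halves_ge: "1/32 \<le> exp (- (5/2) :: real)"
proof -
  have "(1/2)^5 \<le> exp (- (1/2) :: real)^5"
    using exp_ge_add_one_self[of "- (1/2) :: real"] by (intro power_mono) auto
  also have "\<dots> = exp (- (5/2))"
    by (simp flip: exp_of_nat_mult)
  finally show ?thesis
    by (simp add: power_divide)
qed

lemma sq_one_minus_add_sq_le_exp:
  fixes a b :: real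
  assumes a: "0 \<le> a" "a \<le> 1" and b: "b^2 \<le> 1/2500"
  shows "(1 - a)^2 + b^2 \<le> exp (2 * (- a - a^2/4 + b^2))"
proof -
  define E where "E = exp (- 2*a - a^2/2)"
  have "(1 - a)^2 \<le> (exp (- a - a^2/2))^2"
    using one_minus_le_exp_quadratic[OF a(1)] a(2) by (intro power_mono) auto
  also have "\<dots> = E * exp (- (a^2/2))"
    by (simp add: E_def algebra_simps flip: exp_double exp_add)
  finally have sq: "(1 - a)^2 \<le> E * exp (- (a^2/2))" .
  have "(1 - a)^2 + b^2 \<le> E * (1 + 2*b^2)"
  proof (cases "a \<le> 1/5")
    case True
    \<comment> \<open>Here the factor \<open>E \<ge> 1/2\<close> absorbs \<open>b\<^sup>2\<close> into \<open>2 E b\<^sup>2\<close>.\<close>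
    have "1 + (- 2*a - a^2/2) \<le> E"
      unfolding E_def by (rule exp_ge_add_one_self)
    moreover have "a^2 \<le> (1/5)^2"
      using True a by (intro power_mono) auto
    ultimately have E_half: "1/2 \<le> E"
      using True by (simp add: power2_eq_square)
    have "E * exp (- (a^2/2)) \<le> E"
      by (simp add: E_def)
    then have "(1 - a)^2 \<le> E"
      using sq by linarith
    moreover have "b^2 \<le> E * (2 * b^2)"
      using mult_right_mono[OF E_half, of "b^2"] by simp
    ultimately show ?thesis
      by (simp add: algebra_simps)
  next
    case False
    \<comment> \<open>Here \<open>exp (- a\<^sup>2/2) \<le> 50/51\<close> leaves room \<open>E/51 \<ge> 1/1632\<close> for \<open>b\<^sup>2 \<le> 1/2500\<close>.\<close>
    have "(1/5)^2 \<le> a^2"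
      using False a by (intro power_mono) auto
    then have "exp (- (a^2/2)) \<le> exp (- (1/50))"
      by (simp add: power_divide)
    also have "\<dots> \<le> 50/51"
      by (rule exp_minus_one_fiftieth_le)
    finally have "E * exp (- (a^2/2)) \<le> E * (50/51)"
      by (intro mult_left_mono) (simp_all add: E_def)
    moreover have "exp (- (5/2)) \<le> E"
      unfolding E_def using a power_le_one[OF a, of 2] by simp
    ultimately have "(1 - a)^2 + b^2 \<le> E"
      using sq b exp_minus_five_halves_ge by linarith
    moreover have "0 \<le> E * (2 * b^2)"
      by (simp add: E_def)
    ultimately show ?thesis
      unfolding distrib_left by linarith
  qed
  also have "\<dots> \<le> E * exp (2*b^2)"
    using exp_ge_add_one_self[of "2*b^2"] by (simp add: E_def)
  also have "\<dots> = exp (2 * (- a - a^2/4 + b^2))"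
    by (simp add: E_def algebra_simps flip: exp_add)
  finally show ?thesis .
qed

lemma norm_one_minus_le_exp:
  fixes w :: complex
  assumes "0 \<le> Re w" "Re w \<le> 1" "(Im w)^2 \<le> 1/2500"
  shows "norm (1 - w) \<le> exp (- Re w - (Re w)^2/4 + (Im w)^2)"
proof (rule power2_le_imp_le)
  have "(norm (1 - w))^2 = (1 - Re w)^2 + (Im w)^2"
    by (simp add: cmod_power2)
  also have "\<dots> \<le> exp (2 * (- Re w - (Re w)^2/4 + (Im w)^2))"
    using assms by (rule sq_one_minus_add_sq_le_exp)
  finally show "(norm (1 - w))^2 \<le> (exp (- Re w - (Re w)^2/4 + (Im w)^2))^2"
    by (simp only: exp_double)
qed simp

lemma geometric_exponent_le:
  fixes s x y :: real
  assumes s: "0 < s" "s \<le> 1/100" and x: "2 \<le> x" and y: "y^2 \<le> 4"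
  shows "- x * (1 + s) / 2 + s * (y^2 - x^2/4) * (1 + s)^2 / 4 \<le> - x / 2 - s / 32 * (x^2 - y^2)"
proof -
  define u where "u = (1 + s)^2"
  have "1 \<le> u"
    unfolding u_def using s by (intro one_le_power) simp
  have "u \<le> (101/100)^2"
    unfolding u_def using s by (intro power_mono) auto
  then have "y^2 * u \<le> y^2 * (103/100)"
    by (intro mult_left_mono) (auto simp: power_divide)
  moreover have "x^2 \<le> x^2 * u"
    using mult_left_mono[OF \<open>1 \<le> u\<close>, of "x^2"] by simp
  moreover have "4 \<le> x^2"
    using x power_mono[of 2 x 2] by simp
  ultimately have "- x / 2 + y^2 * u / 4 - x^2 * u / 16 \<le> y^2 / 32 - x^2 / 32"
    using x y by linarith
  then have "s * (- x / 2 + y^2 * u / 4 - x^2 * u / 16) \<le> s * (y^2 / 32 - x^2 / 32)"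
    using s by (intro mult_left_mono) auto
  then show ?thesis
    by (simp add: u_def field_simps)
qed

lemma norm_prodinf_le_exp:
  fixes f :: "nat \<Rightarrow> 'a :: {real_normed_field, banach}"
  assumes "convergent_prod f" "\<phi> sums S" "\<And>k. norm (f k) \<le> exp (\<phi> k)"
  shows "norm (prodinf f) \<le> exp S"
proof (rule LIMSEQ_le)
  show "(\<lambda>n. norm (\<Prod>k\<le>n. f k)) \<longlonglongrightarrow> norm (prodinf f)"
    by (intro tendsto_norm convergent_prod_LIMSEQ assms(1))
  show "(\<lambda>n. exp (\<Sum>k\<le>n. \<phi> k)) \<longlonglongrightarrow> exp S"
    using assms(2) unfolding sums_def_le by (rule tendsto_exp)
  show "\<exists>N. \<forall>n\<ge>N. norm (\<Prod>k\<le>n. f k) \<le> exp (\<Sum>k\<le>n. \<phi> k)"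
    using assms(3) by (auto simp: exp_sum simp flip: prod_norm intro!: prod_mono)
qed

lemma prodinf_one_minus_eq_exp:
  fixes w :: "nat \<Rightarrow> complex"
  assumes w: "w sums W" and Q: "(\<lambda>k. norm (w k)^2) sums Q" and small: "\<And>k. norm (w k) \<le> 1/2"
  shows "\<exists>z. (\<Prod>k. 1 - w k) = exp (z - W) \<and> norm z \<le> 2 * Q"
proof -
  define E where "E k = Ln (1 - w k) + w k" for k
  have E_le: "norm (E k) \<le> 2 * norm (w k)^2" for k
  proof -
    have "norm (Ln (1 + - w k) - - w k) \<le> norm (- w k)^2 / (1 - norm (- w k))"
      using small[of k] by (intro Ln_approx_linear) simp
    also have "\<dots> = norm (w k)^2 / (1 - norm (w k))"
      by simp
    also have "\<dots> \<le> norm (w k)^2 / (1/2)"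
      using small[of k] by (intro divide_left_mono) auto
    finally show ?thesis
      by (simp add: E_def)
  qed
  have Q2: "(\<lambda>k. 2 * norm (w k)^2) sums (2 * Q)"
    using Q by (rule sums_mult)
  have E: "summable E"
    using E_le by (intro summable_comparison_test'[OF sums_summable[OF Q2], of 0]) auto
  have "(\<lambda>k. Ln (1 - w k)) sums (suminf E - W)"
    using sums_diff[OF summable_sums[OF E] w] by (simp add: E_def)
  moreover have "1 - w k \<noteq> 0" for k
    using small[of k] by (auto simp: right_minus_eq)
  then have "(\<Prod>k. 1 - w k) = (\<Prod>k. exp (Ln (1 - w k)))"
    by simp
  ultimately have "(\<Prod>k. 1 - w k) = exp (suminf E - W)"
    by (simp add: prodinf_exp sums_summable sums_unique[symmetric])
  moreover have "norm (suminf E) \<le> 2 * Q"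
    using norm_suminf_le[OF E_le sums_summable[OF Q2]] sums_unique[OF Q2] by simp
  ultimately show ?thesis
    by blast
qed

lemma tau_nonneg: "0 \<le> \<epsilon> \<Longrightarrow> \<epsilon> \<le> 1 \<Longrightarrow> 0 \<le> tau \<epsilon>"
  by (simp add: tau_def)

lemma abs_tau_less_one: "0 < \<epsilon> \<Longrightarrow> \<bar>tau \<epsilon>\<bar> < 1"
  by (simp add: tau_def abs_less_iff field_simps add_pos_pos)

lemma tau_power_sums:
  assumes "0 < \<epsilon>"
  shows "(\<lambda>k. tau \<epsilon> ^ k) sums ((1 + sqrt \<epsilon>) / (2 * sqrt \<epsilon>))"
proof -
  have "(\<lambda>k. tau \<epsilon> ^ k) sums (1 / (1 - tau \<epsilon>))"
    using abs_tau_less_one[OF assms] by (intro geometric_sums) simp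
  moreover have "1 / (1 - (1 - s) / (1 + s)) = (1 + s) / (2 * s)" if "0 < s" for s :: real
    using that by (simp add: field_simps)
  ultimately show ?thesis
    using assms by (simp add: tau_def)
qed

lemma tau_power_sq_sums:
  assumes "0 < \<epsilon>"
  shows "(\<lambda>k. (tau \<epsilon> ^ k)^2) sums ((1 + sqrt \<epsilon>)^2 / (4 * sqrt \<epsilon>))"
proof -
  have "\<bar>(tau \<epsilon>)^2\<bar> < 1"
    using abs_tau_less_one[OF assms] by (simp add: abs_square_less_1)
  then have "(\<lambda>k. ((tau \<epsilon>)^2) ^ k) sums (1 / (1 - (tau \<epsilon>)^2))"
    by (intro geometric_sums) simp
  moreover have "1 / (1 - ((1 - s) / (1 + s))^2) = (1 + s)^2 / (4 * s)" if "0 < s" for s :: real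
  proof -
    have "1 - ((1 - s) / (1 + s))^2 = ((1 + s)^2 - (1 - s)^2) / (1 + s)^2"
      using that by (simp add: power_divide field_simps)
    also have "(1 + s)^2 - (1 - s)^2 = 4 * s"
      by (simp add: power2_eq_square algebra_simps)
    finally show ?thesis
      by simp
  qed
  ultimately show ?thesis
    using assms by (simp add: tau_def power_mult [symmetric] mult.commute)
qed

definition g_term :: "real \<Rightarrow> complex \<Rightarrow> nat \<Rightarrow> complex" where
  "g_term \<epsilon> \<mu> k = complex_of_real (sqrt \<epsilon>) * \<mu> * complex_of_real (tau \<epsilon> ^ k)"

lemma g_eq_prodinf_g_term: "g \<epsilon> \<mu> = (\<Prod>k. 1 - g_term \<epsilon> \<mu> k)"
  by (simp add: g_def g_term_def)

lemma Re_g_term: "Re (g_term \<epsilon> \<mu> k) = sqrt \<epsilon> * Re \<mu> * tau \<epsilon> ^ k"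
  by (simp add: g_term_def del: of_real_power)

lemma Im_g_term: "Im (g_term \<epsilon> \<mu> k) = sqrt \<epsilon> * Im \<mu> * tau \<epsilon> ^ k"
  by (simp add: g_term_def del: of_real_power)

lemma norm_g_term: "0 \<le> \<epsilon> \<Longrightarrow> norm (g_term \<epsilon> \<mu> k) = sqrt \<epsilon> * cmod \<mu> * \<bar>tau \<epsilon>\<bar> ^ k"
  by (simp add: g_term_def norm_mult power_abs del: of_real_power)

lemma g_term_sums:
  assumes "0 < \<epsilon>"
  shows "g_term \<epsilon> \<mu> sums (\<mu> * (1 + sqrt \<epsilon>) / 2)"
proof -
  have "(\<lambda>k. complex_of_real (tau \<epsilon> ^ k)) sums complex_of_real ((1 + sqrt \<epsilon>) / (2 * sqrt \<epsilon>))"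
    unfolding sums_of_real_iff by (rule tau_power_sums[OF assms])
  from sums_mult[OF this, of "complex_of_real (sqrt \<epsilon>) * \<mu>"]
  have "g_term \<epsilon> \<mu> sums (complex_of_real (sqrt \<epsilon>) * \<mu> * complex_of_real ((1 + sqrt \<epsilon>) / (2 * sqrt \<epsilon>)))"
    by (simp only: g_term_def[abs_def])
  also have "complex_of_real (sqrt \<epsilon>) * \<mu> * complex_of_real ((1 + sqrt \<epsilon>) / (2 * sqrt \<epsilon>))
      = \<mu> * (1 + sqrt \<epsilon>) / 2"
    using assms by (simp add: field_simps)
  finally show ?thesis .
qed

lemma norm_g_term_sq_sums:
  assumes "0 < \<epsilon>"
  shows "(\<lambda>k. norm (g_term \<epsilon> \<mu> k)^2) sums (sqrt \<epsilon> * (cmod \<mu>)^2 * (1 + sqrt \<epsilon>)^2 / 4)"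
proof -
  have "(\<lambda>k. norm (g_term \<epsilon> \<mu> k)^2) = (\<lambda>k. (sqrt \<epsilon> * cmod \<mu>)^2 * (tau \<epsilon> ^ k)^2)"
    using assms by (simp add: fun_eq_iff norm_g_term power_mult_distrib flip: power_abs)
  moreover have "(\<lambda>k. (sqrt \<epsilon> * cmod \<mu>)^2 * (tau \<epsilon> ^ k)^2)
      sums ((sqrt \<epsilon> * cmod \<mu>)^2 * ((1 + sqrt \<epsilon>)^2 / (4 * sqrt \<epsilon>)))"
    using tau_power_sq_sums[OF assms] by (rule sums_mult)
  moreover have "(sqrt \<epsilon> * cmod \<mu>)^2 * ((1 + sqrt \<epsilon>)^2 / (4 * sqrt \<epsilon>))
      = sqrt \<epsilon> * (cmod \<mu>)^2 * (1 + sqrt \<epsilon>)^2 / 4"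
    using assms by (simp add: field_simps power2_eq_square)
  ultimately show ?thesis
    by (simp only:)
qed

lemma summable_norm_g_term: "0 < \<epsilon> \<Longrightarrow> summable (\<lambda>k. norm (g_term \<epsilon> \<mu> k))"
  using abs_tau_less_one[of \<epsilon>]
  by (simp add: norm_g_term summable_geometric summable_mult del: real_sqrt_gt_0_iff)

lemma g_eq_exp_perturbed:
  assumes \<epsilon>: "0 < \<epsilon>" "sqrt \<epsilon> \<le> 1/2" "sqrt \<epsilon> * M \<le> 1/2" and \<mu>: "cmod \<mu> \<le> M"
  shows "\<exists>z. g \<epsilon> \<mu> = exp (- \<mu> / 2 + z) \<and> cmod z \<le> sqrt \<epsilon> * (M/2 + 2 * M^2)"
proof -
  define s where "s = sqrt \<epsilon>"
  have s: "0 < s" "s \<le> 1/2"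
    using \<epsilon> by (auto simp: s_def)
  have "norm (g_term \<epsilon> \<mu> k) \<le> 1/2" for k
  proof -
    have "0 \<le> M"
      using \<mu> norm_ge_zero order_trans by blast
    then have "s * cmod \<mu> * \<bar>tau \<epsilon>\<bar> ^ k \<le> s * M * 1"
      using s \<mu> abs_tau_less_one[OF \<epsilon>(1)] by (intro mult_mono power_le_one) auto
    moreover have "norm (g_term \<epsilon> \<mu> k) = s * cmod \<mu> * \<bar>tau \<epsilon>\<bar> ^ k"
      using \<epsilon>(1) by (simp add: norm_g_term s_def)
    ultimately show ?thesis
      using \<epsilon>(3) unfolding s_def by linarith
  qed
  with g_term_sums[OF \<epsilon>(1)] norm_g_term_sq_sums[OF \<epsilon>(1)] obtain z where
    z: "g \<epsilon> \<mu> = exp (z - \<mu> * (1 + s) / 2)" "cmod z \<le> 2 * (s * (cmod \<mu>)^2 * (1 + s)^2 / 4)"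
    unfolding g_eq_prodinf_g_term s_def by (blast dest: prodinf_one_minus_eq_exp)
  have "z - \<mu> * (1 + s) / 2 = - \<mu> / 2 + (z - s * \<mu> / 2)"
    by (simp add: field_simps)
  then have "g \<epsilon> \<mu> = exp (- \<mu> / 2 + (z - s * \<mu> / 2))"
    by (simp only: z(1))
  moreover have "cmod (z - s * \<mu> / 2) \<le> s * (M/2 + 2 * M^2)"
  proof -
    have "cmod z \<le> s * ((cmod \<mu>)^2 * (1 + s)^2) / 2"
      using z(2) by simp
    also have "\<dots> \<le> s * (M^2 * (3/2)^2) / 2"
      using s \<mu> by (intro divide_right_mono mult_left_mono mult_mono power_mono) auto
    also have "\<dots> \<le> 2 * s * M^2"
      using s zero_le_power2[of M] by (simp add: power_divide)
    finally have "cmod z \<le> 2 * s * M^2" .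
    moreover have "cmod (s * \<mu> / 2) \<le> s * M / 2"
      using s \<mu> by (simp add: norm_mult)
    ultimately show ?thesis
      using norm_triangle_ineq4[of z "s * \<mu> / 2"] by (simp add: algebra_simps)
  qed
  ultimately show ?thesis
    by (auto simp: s_def)
qed

lemma uniform_limit_g_cball:
  "uniform_limit (cball 0 M) g (\<lambda>\<mu>. exp (- \<mu> / 2)) (at_right 0)"
proof (rule uniform_limitI)
  fix e :: real
  assume "0 < e"
  define C where "C = M/2 + 2 * M^2"
  define K :: "complex set" where "K = cball 0 (M/2 + 1)"
  have "uniformly_continuous_on K exp"
    unfolding K_def by (intro compact_uniformly_continuous continuous_intros) simp
  then obtain d where d: "0 < d" "\<And>a b. a \<in> K \<Longrightarrow> b \<in> K \<Longrightarrow> dist a b < d \<Longrightarrow> dist (exp a) (exp b) < e"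
    unfolding uniformly_continuous_on_def using \<open>0 < e\<close> by (metis dist_commute)
  have sqrt_small: "\<forall>\<^sub>F \<epsilon> in at_right 0. sqrt \<epsilon> * a < c" if "0 < c" for a c :: real
    using that by (intro order_tendstoD) (auto intro!: tendsto_eq_intros)
  have "\<forall>\<^sub>F \<epsilon> in at_right 0. 0 < \<epsilon> \<and> sqrt \<epsilon> * 1 < 1/2 \<and> sqrt \<epsilon> * M < 1/2 \<and> sqrt \<epsilon> * C < min d 1"
    using d(1) by (intro eventually_conj eventually_at_right_less sqrt_small) auto
  then show "\<forall>\<^sub>F \<epsilon> in at_right 0. \<forall>\<mu>\<in>cball 0 M. dist (g \<epsilon> \<mu>) (exp (- \<mu> / 2)) < e"
  proof eventually_elim
    case (elim \<epsilon>)
    show ?case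
    proof
      fix \<mu> :: complex
      assume "\<mu> \<in> cball 0 M"
      then have \<mu>: "cmod \<mu> \<le> M"
        by simp
      obtain z where z: "g \<epsilon> \<mu> = exp (- \<mu> / 2 + z)" "cmod z \<le> sqrt \<epsilon> * C"
        using g_eq_exp_perturbed[OF _ _ _ \<mu>] elim unfolding C_def by fastforce
      have "cmod z < min d 1"
        using z(2) elim by linarith
      moreover have "- \<mu> / 2 \<in> K" "- \<mu> / 2 + z \<in> K"
        using \<mu> \<open>cmod z < min d 1\<close> norm_triangle_ineq[of "- \<mu> / 2" z] by (auto simp: K_def)
      ultimately show "dist (g \<epsilon> \<mu>) (exp (- \<mu> / 2)) < e"
        using d(2)[of "- \<mu> / 2 + z" "- \<mu> / 2"] by (simp add: z(1) dist_norm)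
    qed
  qed
qed

lemma norm_one_minus_g_term_le:
  assumes \<epsilon>: "0 < \<epsilon>" "sqrt \<epsilon> \<le> 1/100"
    and \<mu>: "0 \<le> Re \<mu>" "Re \<mu> \<le> 1 / sqrt \<epsilon>" "\<bar>Im \<mu>\<bar> \<le> 2"
  shows "norm (1 - g_term \<epsilon> \<mu> k)
    \<le> exp (- (sqrt \<epsilon> * Re \<mu>) * tau \<epsilon> ^ k + ((sqrt \<epsilon> * Im \<mu>)^2 - (sqrt \<epsilon> * Re \<mu>)^2 / 4) * (tau \<epsilon> ^ k)^2)"
proof -
  define s t where "s = sqrt \<epsilon>" and "t = tau \<epsilon> ^ k"
  have "\<epsilon> \<le> 1"
    using real_sqrt_le_1_iff[of \<epsilon>] \<epsilon>(2) by linarith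
  then have "0 \<le> tau \<epsilon>"
    using \<epsilon>(1) by (simp add: tau_nonneg)
  then have t: "0 \<le> t" "t \<le> 1"
    using abs_tau_less_one[OF \<epsilon>(1)] by (simp_all add: t_def power_le_one)
  have sx: "0 \<le> s * Re \<mu>" "s * Re \<mu> \<le> 1"
    using \<epsilon>(1) \<mu> by (auto simp: s_def field_simps)
  have "0 \<le> Re (g_term \<epsilon> \<mu> k)" "Re (g_term \<epsilon> \<mu> k) \<le> 1"
    using sx t mult_mono[OF sx(2) t(2)] by (auto simp: Re_g_term s_def t_def)
  moreover have "(Im (g_term \<epsilon> \<mu> k))^2 \<le> 1/2500"
  proof -
    have "(Im (g_term \<epsilon> \<mu> k))^2 = s^2 * \<bar>Im \<mu>\<bar>^2 * t^2"
      by (simp add: Im_g_term s_def t_def power_mult_distrib)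
    also have "\<dots> \<le> (1/100)^2 * 2^2 * 1"
      using \<epsilon> \<mu>(3) t by (intro mult_mono power_mono) (auto simp: s_def power_le_one)
    finally show ?thesis
      by (simp add: power_divide)
  qed
  ultimately have "norm (1 - g_term \<epsilon> \<mu> k)
      \<le> exp (- Re (g_term \<epsilon> \<mu> k) - (Re (g_term \<epsilon> \<mu> k))^2/4 + (Im (g_term \<epsilon> \<mu> k))^2)"
    by (rule norm_one_minus_le_exp)
  then show ?thesis
    by (simp add: Re_g_term Im_g_term power_mult_distrib algebra_simps)
qed

lemma norm_g_le_on_strip:
  assumes \<epsilon>: "0 < \<epsilon>" "sqrt \<epsilon> \<le> 1/100"
    and \<mu>: "2 \<le> Re \<mu>" "Re \<mu> \<le> 1 / sqrt \<epsilon>" "\<bar>Im \<mu>\<bar> \<le> 2"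
  shows "cmod (g \<epsilon> \<mu>) \<le> cmod (exp (- \<mu> / 2)) * cmod (exp (- complex_of_real (1/32 * sqrt \<epsilon>) * \<mu>\<^sup>2))"
proof -
  define s x y where "s = sqrt \<epsilon>" and "x = Re \<mu>" and "y = Im \<mu>"
  define \<phi> where "\<phi> k = - (s * x) * tau \<epsilon> ^ k + ((s * y)^2 - (s * x)^2 / 4) * (tau \<epsilon> ^ k)^2" for k
  have s: "0 < s" "s \<le> 1/100"
    using \<epsilon> by (auto simp: s_def)
  have y: "y^2 \<le> 4"
    using \<mu>(3) power_mono[of "\<bar>y\<bar>" 2 2] by (simp add: y_def)
  have "convergent_prod (\<lambda>k. 1 - g_term \<epsilon> \<mu> k)"
    using summable_norm_g_term[OF \<epsilon>(1)]
    by (simp add: abs_convergent_prod_imp_convergent_prod abs_convergent_prod_conv_summable)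
  moreover have "\<phi> sums (- x * (1 + s) / 2 + s * (y^2 - x^2/4) * (1 + s)^2 / 4)"
  proof -
    have "\<phi> sums (- (s * x) * ((1 + s) / (2 * s)) + ((s * y)^2 - (s * x)^2 / 4) * ((1 + s)^2 / (4 * s)))"
      unfolding \<phi>_def[abs_def] s_def
      using tau_power_sums[OF \<epsilon>(1)] tau_power_sq_sums[OF \<epsilon>(1)] by (intro sums_add sums_mult)
    also have "- (s * x) * ((1 + s) / (2 * s)) + ((s * y)^2 - (s * x)^2 / 4) * ((1 + s)^2 / (4 * s))
        = - x * (1 + s) / 2 + s * (y^2 - x^2/4) * (1 + s)^2 / 4"
      using s by (simp add: field_simps power2_eq_square)
    finally show ?thesis .
  qed
  moreover have "norm (1 - g_term \<epsilon> \<mu> k) \<le> exp (\<phi> k)" for k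
    unfolding \<phi>_def s_def x_def y_def using \<epsilon> \<mu> by (intro norm_one_minus_g_term_le) auto
  ultimately have "cmod (g \<epsilon> \<mu>) \<le> exp (- x * (1 + s) / 2 + s * (y^2 - x^2/4) * (1 + s)^2 / 4)"
    unfolding g_eq_prodinf_g_term by (rule norm_prodinf_le_exp)
  also have "\<dots> \<le> exp (- x / 2 - s / 32 * (x^2 - y^2))"
    using geometric_exponent_le[OF s \<mu>(1)[folded x_def] y] by simp
  also have "\<dots> = cmod (exp (- \<mu> / 2)) * cmod (exp (- complex_of_real (1/32 * sqrt \<epsilon>) * \<mu>\<^sup>2))"
    by (simp add: norm_exp_eq_Re Re_power2 x_def y_def s_def flip: exp_add)
  finally show ?thesis .
qed

lemma sin_cos_pi_div_10_bounds:
  "0 < sin (pi/10)" "sin (pi/10) \<le> 2/5" "4/5 \<le> cos (pi/10)"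
proof -
  show sin_pos: "0 < sin (pi/10)"
    by (rule sin_gt_zero) (auto simp: pi_gt_zero)
  have "sin (pi/10) \<le> pi/10"
    by (rule sin_x_le_x) (simp add: pi_ge_zero)
  also have "\<dots> \<le> 2/5"
    using pi_less_4 by simp
  finally show sin_le: "sin (pi/10) \<le> 2/5" .
  have "(sin (pi/10))^2 \<le> (2/5)^2"
    using sin_pos sin_le by (intro power_mono) auto
  then have "(4/5)^2 \<le> (cos (pi/10))^2"
    by (simp add: cos_squared_eq power_divide)
  moreover have "0 \<le> cos (pi/10)"
    by (rule cos_ge_zero) (auto simp: pi_ge_zero)
  ultimately show "4/5 \<le> cos (pi/10)"
    by (rule power2_le_imp_le)
qed

lemma tan_pi_div_10_bounds: "0 < tan (pi/10)" "tan (pi/10) \<le> 1/2"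
  using sin_cos_pi_div_10_bounds
  by (auto simp: tan_def divide_le_eq intro!: divide_pos_pos)

lemma two_le_div_tan_pi_div_10:
  assumes "1 \<le> r"
  shows "2 \<le> r / tan (pi/10)"
proof -
  have "r * 2 \<le> r * (1 / tan (pi/10))"
    using tan_pi_div_10_bounds assms by (intro mult_left_mono) (auto simp: le_divide_eq)
  then show ?thesis
    using assms by simp
qed

lemma R1_eq_cball: "R1 r = cball 0 (r / sin (pi/10))"
  by (auto simp: R1_def)

lemma Complex_mem_R1:
  assumes "\<bar>a\<bar> \<le> r / tan (pi/10)" "\<bar>b\<bar> \<le> r"
  shows "Complex a b \<in> R1 r"
proof -
  define S C where "S = sin (pi/10)" and "C = cos (pi/10)"
  have S: "0 < S" and r: "0 \<le> r"
    using sin_cos_pi_div_10_bounds assms(2) by (auto simp: S_def)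
  have "(cmod (Complex a b))^2 = \<bar>a\<bar>^2 + \<bar>b\<bar>^2"
    by (simp add: cmod_power2)
  also have "\<dots> \<le> (r * C / S)^2 + r^2"
  proof (intro add_mono power_mono)
    show "\<bar>a\<bar> \<le> r * C / S"
      using assms(1) by (simp add: tan_def S_def C_def)
  qed (use assms(2) in auto)
  also have "\<dots> = (r / S)^2 * (C^2 + S^2)"
    using S by (simp add: field_simps)
  also have "\<dots> = (r / S)^2"
    by (simp add: S_def C_def)
  finally have "(cmod (Complex a b))^2 \<le> (r / S)^2" .
  moreover have "0 \<le> r / S"
    using S r by simp
  ultimately have "cmod (Complex a b) \<le> r / S"
    by (rule power2_le_imp_le)
  then show ?thesis
    by (simp add: R1_def S_def)
qed

lemma Ctilde_subset_R1_R2: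
  assumes r: "1 \<le> r" and \<epsilon>: "0 < \<epsilon>"
  shows "Ctilde \<epsilon> \<subseteq> R1 r \<union> R2 r \<epsilon>"
proof
  define K where "K = r / tan (pi/10)"
  have K: "2 \<le> K"
    unfolding K_def using r by (rule two_le_div_tan_pi_div_10)
  have in_R1: "Complex a b \<in> R1 r" if "\<bar>a\<bar> \<le> K" "\<bar>b\<bar> \<le> 1" for a b
    using that r by (intro Complex_mem_R1) (auto simp: K_def)
  have in_R2: "Complex a b \<in> R2 r \<epsilon>" if "K \<le> a" "a \<le> 1 / sqrt \<epsilon>" "\<bar>b\<bar> \<le> 1" for a b
    using that by (auto simp: R2_def K_def)
  fix z
  assume "z \<in> Ctilde \<epsilon>"
  then consider (arc) \<theta> where "z = cis \<theta>"
    | (horizontal) x s where "z = Complex x s" "\<bar>s\<bar> = 1" "0 < x" "x \<le> 1 / sqrt \<epsilon> - 1"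
    | (vertical) y where "z = Complex (1 / sqrt \<epsilon> - 1) y" "\<bar>y\<bar> < 1"
    unfolding Ctilde_def by (auto simp: abs_less_iff)
  then show "z \<in> R1 r \<union> R2 r \<epsilon>"
  proof cases
    case arc
    have "\<bar>cos \<theta>\<bar> \<le> K"
      using abs_cos_le_one[of \<theta>] K by linarith
    then have "Complex (cos \<theta>) (sin \<theta>) \<in> R1 r"
      using in_R1 abs_sin_le_one by blast
    moreover have "z = Complex (cos \<theta>) (sin \<theta>)"
      using arc by (simp add: complex_eq_iff)
    ultimately show ?thesis
      by simp
  next
    case horizontal
    then show ?thesis
      using in_R1[of x s] in_R2[of x s] by (cases "x \<le> K") auto
  next
    case vertical
    define v where "v = 1 / sqrt \<epsilon> - 1"
    have "- 1 < v" "v \<le> 1 / sqrt \<epsilon>"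
      using \<epsilon> by (simp_all add: v_def)
    then show ?thesis
      using vertical[folded v_def] K in_R1[of v y] in_R2[of v y] by (cases "v \<le> K") auto
  qed
qed

theorem lemma14:
  fixes r :: real
  assumes "r \<ge> 1"
  shows "compact (R1 r)
    \<and> (\<forall>\<epsilon>>0. Ctilde \<epsilon> \<subseteq> R1 r \<union> R2 r \<epsilon>)
    \<and> uniform_limit (R1 r) (\<lambda>\<epsilon> \<mu>. g \<epsilon> \<mu>) (\<lambda>\<mu>. exp (- \<mu> / 2)) (at_right 0)
    \<and> (\<exists>\<epsilon>0>0. \<exists>c>0. \<forall>\<epsilon>. 0 < \<epsilon> \<and> \<epsilon> < \<epsilon>0 \<longrightarrow>
          (\<forall>\<mu>\<in>R2 r \<epsilon>. cmod (g \<epsilon> \<mu>)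
              \<le> cmod (exp (- \<mu> / 2)) * cmod (exp (- complex_of_real (c * sqrt \<epsilon>) * \<mu>\<^sup>2))))"
proof (intro conjI allI impI exI ballI)
  show "compact (R1 r)"
    by (simp add: R1_eq_cball)
  show "Ctilde \<epsilon> \<subseteq> R1 r \<union> R2 r \<epsilon>" if "\<epsilon> > 0" for \<epsilon>
    using assms that by (rule Ctilde_subset_R1_R2)
  show "uniform_limit (R1 r) (\<lambda>\<epsilon> \<mu>. g \<epsilon> \<mu>) (\<lambda>\<mu>. exp (- \<mu> / 2)) (at_right 0)"
    unfolding R1_eq_cball by (rule uniform_limit_g_cball)
  show "(0::real) < (1/100)^2" "(0::real) < 1/32"
    by simp_all
  fix \<epsilon> \<mu>
  assume \<epsilon>: "0 < \<epsilon> \<and> \<epsilon> < (1/100)^2" and \<mu>: "\<mu> \<in> R2 r \<epsilon>"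
  have "2 \<le> Re \<mu>"
    using two_le_div_tan_pi_div_10[OF assms] \<mu> by (auto simp: R2_def)
  moreover have "sqrt \<epsilon> \<le> 1/100"
    using \<epsilon> real_sqrt_less_iff[of \<epsilon> "(1/100)^2"] by simp
  ultimately show "cmod (g \<epsilon> \<mu>) \<le> cmod (exp (- \<mu> / 2)) * cmod (exp (- complex_of_real (1/32 * sqrt \<epsilon>) * \<mu>\<^sup>2))"
    using \<epsilon> \<mu> by (intro norm_g_le_on_strip) (auto simp: R2_def abs_le_iff)
qed

end
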